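(* Let $(X,\mathcal{E})$ be an extremely normal ballean and let $\mathcal{E}'$ be a coarse structure on $X$ with $\mathcal{E}\subseteq\mathcal{E}'$ such that $(X,\mathcal{E}')$ is maximal. Then the bounded subsets of $(X,\mathcal{E})$ and of $(X,\mathcal{E}')$ coincide, and $\mathcal{E}'=\Uparrow\mathcal{B}_{(X,\mathcal{E})}$.
   Context: A ballean $(X,\mathcal{E})$ is a set with a coarse structure. $E[x]=\{y:(x,y)\in E\}$, $E[A]=\bigcup_{a\in A}E[a]$. $Y$ is bounded if $Y\subseteq E[x]$ for some $x$ and $E\in\mathcal{E}$; $\mathcal{B}_{(X,\mathcal{E})}$ denotes the family of bounded sets. $A$ is large if $X=E[A]$ for some $E\in\mathcal{E}$. An unbounded ballean is extremely normal if every unbounded subset is large, and maximal if $X$ is bounded in every coarse structure strictly containing $\mathcal{E}$. For a bornology $\mathcal{B}$ on $X$ (a family of subsets closed under finite unions and subsets with $\bigcup\mathcal{B}=X$), a coarse structure is compatible with $\mathcal{B}$ if its family of bounded sets equals $\mathcal{B}$; $\Uparrow\mathcal{B}$ denotes the largest coarse structure on $X$ compatible with $\mathcal{B}$ (generated by all $E\subseteq X\times X$ with $E=E^{-1}$, $\Delta_X\subseteq E$, and $E[B]\in\mathcal{B}$ for each $B\in\mathcal{B}$). *)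

theory Defs
  imports Main
begin

definition coarse_structure :: "'a set \<Rightarrow> ('a \<times> 'a) set set \<Rightarrow> bool" where
  "coarse_structure X \<E> \<longleftrightarrow>
     Id_on X \<in> \<E> \<and>
     (\<forall>E\<in>\<E>. Id_on X \<subseteq> E \<and> E \<subseteq> X \<times> X) \<and>
     (\<forall>E\<in>\<E>. \<forall>E'. Id_on X \<subseteq> E' \<and> E' \<subseteq> E \<longrightarrow> E' \<in> \<E>) \<and>
     (\<forall>E\<in>\<E>. E\<inverse> \<in> \<E>) \<and>
     (\<forall>E\<in>\<E>. \<forall>F\<in>\<E>. E \<union> F \<in> \<E>) \<and>
     (\<forall>E\<in>\<E>. \<forall>F\<in>\<E>. E O F \<in> \<E>)"

definition ballean :: "'a set \<Rightarrow> ('a \<times> 'a) set set \<Rightarrow> bool" where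
  "ballean X \<E> \<longleftrightarrow> coarse_structure X \<E> \<and> \<Union>\<E> = X \<times> X"

text \<open>E[x] = E `` {x}, E[A] = E `` A.\<close>
definition bounded_in :: "'a set \<Rightarrow> ('a \<times> 'a) set set \<Rightarrow> 'a set \<Rightarrow> bool" where
  "bounded_in X \<E> Y \<longleftrightarrow> Y \<subseteq> X \<and> (\<exists>x\<in>X. \<exists>E\<in>\<E>. Y \<subseteq> E `` {x})"

definition bounded_sets :: "'a set \<Rightarrow> ('a \<times> 'a) set set \<Rightarrow> 'a set set" where
  "bounded_sets X \<E> = {Y. bounded_in X \<E> Y}"

definition large_in :: "'a set \<Rightarrow> ('a \<times> 'a) set set \<Rightarrow> 'a set \<Rightarrow> bool" where
  "large_in X \<E> A \<longleftrightarrow> A \<subseteq> X \<and> (\<exists>E\<in>\<E>. X = E `` A)"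

definition unbounded_ballean :: "'a set \<Rightarrow> ('a \<times> 'a) set set \<Rightarrow> bool" where
  "unbounded_ballean X \<E> \<longleftrightarrow> ballean X \<E> \<and> \<not> bounded_in X \<E> X"

definition extremely_normal :: "'a set \<Rightarrow> ('a \<times> 'a) set set \<Rightarrow> bool" where
  "extremely_normal X \<E> \<longleftrightarrow> unbounded_ballean X \<E> \<and>
     (\<forall>Y. Y \<subseteq> X \<and> \<not> bounded_in X \<E> Y \<longrightarrow> large_in X \<E> Y)"

definition maximal_ballean :: "'a set \<Rightarrow> ('a \<times> 'a) set set \<Rightarrow> bool" where
  "maximal_ballean X \<E> \<longleftrightarrow> unbounded_ballean X \<E> \<and>
     (\<forall>\<E>'. coarse_structure X \<E>' \<and> \<E> \<subset> \<E>' \<longrightarrow> bounded_in X \<E>' X)"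

definition generated_coarse :: "'a set \<Rightarrow> ('a \<times> 'a) set set \<Rightarrow> ('a \<times> 'a) set set" where
  "generated_coarse X G = \<Inter> {\<E>. coarse_structure X \<E> \<and> G \<subseteq> \<E>}"

definition Uparrow :: "'a set \<Rightarrow> 'a set set \<Rightarrow> ('a \<times> 'a) set set" where
  "Uparrow X \<B> = generated_coarse X
     {E. E \<subseteq> X \<times> X \<and> E = E\<inverse> \<and> Id_on X \<subseteq> E \<and> (\<forall>B\<in>\<B>. E `` B \<in> \<B>)}"

end

theory Submission
  imports Defs
begin

text \<open>Enlarging the coarse structure of an extremely normal ballean cannot create new bounded
  sets: an unbounded set is large, and a bounded set stays bounded under any entourage of the
  larger structure, so its image would make the whole space bounded. Hence the bounded sets of
  \<open>\<E>'\<close> form the bornology \<open>\<B>\<close> of \<open>\<E>\<close>. Every entourage of \<open>\<E>'\<close> lies in \<open>\<Up>\<B>\<close>, and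
  every entourage of \<open>\<Up>\<B>\<close> maps \<open>\<B>\<close> into itself, so \<open>X\<close> is unbounded in \<open>\<Up>\<B>\<close>;
  maximality of \<open>\<E>'\<close> forces \<open>\<E>' = \<Up>\<B>\<close>.\<close>

lemma coarse_structure_Inter:
  assumes "\<And>\<E>. \<E> \<in> S \<Longrightarrow> coarse_structure X \<E>" and "S \<noteq> {}"
  shows "coarse_structure X (\<Inter>S)"
proof -
  have entourage: "Id_on X \<subseteq> E \<and> E \<subseteq> X \<times> X" if E: "E \<in> \<Inter>S" for E
  proof -
    obtain \<E> where "\<E> \<in> S" "E \<in> \<E>" using assms(2) E by blast
    then show ?thesis using assms(1) unfolding coarse_structure_def by blast
  qed
  have "Id_on X \<in> \<Inter>S"
    and "\<forall>E\<in>\<Inter>S. \<forall>E'. Id_on X \<subseteq> E' \<and> E' \<subseteq> E \<longrightarrow> E' \<in> \<Inter>S"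
    and "\<forall>E\<in>\<Inter>S. E\<inverse> \<in> \<Inter>S"
    and "\<forall>E\<in>\<Inter>S. \<forall>F\<in>\<Inter>S. E \<union> F \<in> \<Inter>S"
    and "\<forall>E\<in>\<Inter>S. \<forall>F\<in>\<Inter>S. E O F \<in> \<Inter>S"
    using assms(1) unfolding coarse_structure_def by blast+
  with entourage show ?thesis unfolding coarse_structure_def by blast
qed

lemma coarse_structure_all_entourages:
  "coarse_structure X {E. Id_on X \<subseteq> E \<and> E \<subseteq> X \<times> X}"
proof -
  have "Id_on X \<subseteq> E O F" if "Id_on X \<subseteq> E" "Id_on X \<subseteq> F" for E F :: "('a \<times> 'a) set"
    using that by blast
  then show ?thesis unfolding coarse_structure_def by auto
qed

lemma coarse_structure_generated_coarse:
  assumes "G \<subseteq> {E. Id_on X \<subseteq> E \<and> E \<subseteq> X \<times> X}"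
  shows "coarse_structure X (generated_coarse X G)"
  unfolding generated_coarse_def
  using coarse_structure_all_entourages assms by (intro coarse_structure_Inter) blast+

lemma generated_coarse_superset: "G \<subseteq> generated_coarse X G"
  unfolding generated_coarse_def by auto

lemma generated_coarse_least:
  "coarse_structure X \<E> \<Longrightarrow> G \<subseteq> \<E> \<Longrightarrow> generated_coarse X G \<subseteq> \<E>"
  unfolding generated_coarse_def by auto

lemma coarse_structure_Uparrow: "coarse_structure X (Uparrow X \<B>)"
  unfolding Uparrow_def by (rule coarse_structure_generated_coarse) blast

lemma bounded_in_subset: "bounded_in X \<E> Y \<Longrightarrow> Z \<subseteq> Y \<Longrightarrow> bounded_in X \<E> Z"
  unfolding bounded_in_def by blast

lemma bounded_in_mono: "\<E> \<subseteq> \<E>' \<Longrightarrow> bounded_in X \<E> Y \<Longrightarrow> bounded_in X \<E>' Y"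
  unfolding bounded_in_def by blast

lemma bounded_in_singleton:
  assumes "coarse_structure X \<E>" and "x \<in> X"
  shows "bounded_in X \<E> {x}"
proof -
  have "Id_on X \<in> \<E>" using assms(1) unfolding coarse_structure_def by blast
  then show ?thesis using assms(2) unfolding bounded_in_def by blast
qed

lemma bounded_in_Image:
  assumes "coarse_structure X \<E>" and "E \<in> \<E>" and "bounded_in X \<E> Y"
  shows "bounded_in X \<E> (E `` Y)"
proof -
  obtain x F where "x \<in> X" "F \<in> \<E>" "Y \<subseteq> F `` {x}"
    using assms(3) unfolding bounded_in_def by blast
  moreover from this have "E `` Y \<subseteq> (F O E) `` {x}" by blast
  moreover have "F O E \<in> \<E>" "E `` Y \<subseteq> X"
    using assms(1,2) \<open>F \<in> \<E>\<close> unfolding coarse_structure_def by blast+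
  ultimately show ?thesis unfolding bounded_in_def by blast
qed

text \<open>Connectedness of the ballean (\<open>\<Union>\<E> = X \<times> X\<close>) joins the two centres.\<close>
lemma bounded_in_Un:
  assumes "ballean X \<E>" and "bounded_in X \<E> Y" and "bounded_in X \<E> Z"
  shows "bounded_in X \<E> (Y \<union> Z)"
proof -
  have cs: "coarse_structure X \<E>" and conn: "\<Union>\<E> = X \<times> X"
    using assms(1) unfolding ballean_def by auto
  obtain x F where x: "x \<in> X" "F \<in> \<E>" "Y \<subseteq> F `` {x}" "Y \<subseteq> X"
    using assms(2) unfolding bounded_in_def by blast
  obtain y G where y: "y \<in> X" "G \<in> \<E>" "Z \<subseteq> G `` {y}" "Z \<subseteq> X"
    using assms(3) unfolding bounded_in_def by blast
  obtain H where H: "H \<in> \<E>" "(x, y) \<in> H" using conn x(1) y(1) by blast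
  have "F \<union> H O G \<in> \<E>" using cs x(2) y(2) H(1) unfolding coarse_structure_def by blast
  moreover have "Y \<union> Z \<subseteq> (F \<union> H O G) `` {x}" using x(3) y(3) H(2) by blast
  ultimately show ?thesis unfolding bounded_in_def using x y by blast
qed

lemma bounded_in_extremely_normal_iff:
  assumes "extremely_normal X \<E>" and "unbounded_ballean X \<E>'" and "\<E> \<subseteq> \<E>'"
  shows "bounded_in X \<E> Y \<longleftrightarrow> bounded_in X \<E>' Y"
proof
  assume "bounded_in X \<E> Y"
  then show "bounded_in X \<E>' Y" using assms(3) by (rule bounded_in_mono[rotated])
next
  assume bdd': "bounded_in X \<E>' Y"
  have cs': "coarse_structure X \<E>'" and unbdd': "\<not> bounded_in X \<E>' X"
    using assms(2) unfolding unbounded_ballean_def ballean_def by auto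
  show "bounded_in X \<E> Y"
  proof (rule ccontr)
    assume "\<not> bounded_in X \<E> Y"
    moreover have "Y \<subseteq> X" using bdd' unfolding bounded_in_def by blast
    ultimately obtain E where "E \<in> \<E>" "X = E `` Y"
      using assms(1) unfolding extremely_normal_def large_in_def by blast
    then have "bounded_in X \<E>' X" using bounded_in_Image[OF cs' _ bdd'] assms(3) by auto
    with unbdd' show False ..
  qed
qed

definition bornology_entourages :: "'a set \<Rightarrow> 'a set set \<Rightarrow> ('a \<times> 'a) set set" where
  "bornology_entourages X \<B> =
     {E. Id_on X \<subseteq> E \<and> E \<subseteq> X \<times> X \<and> (\<forall>B\<in>\<B>. E `` B \<in> \<B> \<and> E\<inverse> `` B \<in> \<B>)}"

lemma coarse_structure_bornology_entourages:
  assumes "\<B> \<subseteq> Pow X"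
    and subset_closed: "\<And>A B. B \<in> \<B> \<Longrightarrow> A \<subseteq> B \<Longrightarrow> A \<in> \<B>"
    and Un_closed: "\<And>A B. A \<in> \<B> \<Longrightarrow> B \<in> \<B> \<Longrightarrow> A \<union> B \<in> \<B>"
  shows "coarse_structure X (bornology_entourages X \<B>)"
  unfolding coarse_structure_def
proof (intro conjI ballI allI impI)
  let ?C = "bornology_entourages X \<B>"
  have "Id_on X `` B = B" if "B \<in> \<B>" for B using assms(1) that by blast
  then show "Id_on X \<in> ?C" unfolding bornology_entourages_def by auto
  fix E assume E: "E \<in> ?C"
  then show "Id_on X \<subseteq> E" "E \<subseteq> X \<times> X" unfolding bornology_entourages_def by blast+
  show "E\<inverse> \<in> ?C" using E unfolding bornology_entourages_def by auto
  {
    fix E' assume E': "Id_on X \<subseteq> E' \<and> E' \<subseteq> E"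
    have "E' `` B \<in> \<B> \<and> E'\<inverse> `` B \<in> \<B>" if "B \<in> \<B>" for B
    proof -
      have "E `` B \<in> \<B>" "E\<inverse> `` B \<in> \<B>"
        using E that unfolding bornology_entourages_def by blast+
      moreover have "E' `` B \<subseteq> E `` B" "E'\<inverse> `` B \<subseteq> E\<inverse> `` B" using E' by blast+
      ultimately show ?thesis using subset_closed by blast
    qed
    then show "E' \<in> ?C" using E E' unfolding bornology_entourages_def by blast
  }
  fix F assume F: "F \<in> ?C"
  have E_maps: "E `` B \<in> \<B>" "E\<inverse> `` B \<in> \<B>"
    and F_maps: "F `` B \<in> \<B>" "F\<inverse> `` B \<in> \<B>" if "B \<in> \<B>" for B
    using E F that unfolding bornology_entourages_def by blast+
  have "E \<union> F \<subseteq> X \<times> X" "Id_on X \<subseteq> E O F" "E O F \<subseteq> X \<times> X"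
    using E F unfolding bornology_entourages_def by blast+
  then show "E \<union> F \<in> ?C" "E O F \<in> ?C"
    using E F E_maps F_maps Un_closed
    unfolding bornology_entourages_def
    by (auto simp: Un_Image converse_Un relcomp_Image converse_relcomp)
qed

lemma Uparrow_subset_bornology_entourages:
  assumes "\<B> \<subseteq> Pow X"
    and "\<And>A B. B \<in> \<B> \<Longrightarrow> A \<subseteq> B \<Longrightarrow> A \<in> \<B>"
    and "\<And>A B. A \<in> \<B> \<Longrightarrow> B \<in> \<B> \<Longrightarrow> A \<union> B \<in> \<B>"
  shows "Uparrow X \<B> \<subseteq> bornology_entourages X \<B>"
  unfolding Uparrow_def
proof (rule generated_coarse_least)
  show "coarse_structure X (bornology_entourages X \<B>)"
    using assms by (rule coarse_structure_bornology_entourages)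
  show "{E. E \<subseteq> X \<times> X \<and> E = E\<inverse> \<and> Id_on X \<subseteq> E \<and> (\<forall>B\<in>\<B>. E `` B \<in> \<B>)}
      \<subseteq> bornology_entourages X \<B>"
    unfolding bornology_entourages_def by (auto dest: sym)
qed

lemma bounded_in_Uparrow_imp_mem:
  assumes "\<B> \<subseteq> Pow X"
    and subset_closed: "\<And>A B. B \<in> \<B> \<Longrightarrow> A \<subseteq> B \<Longrightarrow> A \<in> \<B>"
    and "\<And>A B. A \<in> \<B> \<Longrightarrow> B \<in> \<B> \<Longrightarrow> A \<union> B \<in> \<B>"
    and singletons: "\<And>x. x \<in> X \<Longrightarrow> {x} \<in> \<B>"
    and "bounded_in X (Uparrow X \<B>) Y"
  shows "Y \<in> \<B>"
proof -
  obtain x E where "x \<in> X" "E \<in> Uparrow X \<B>" "Y \<subseteq> E `` {x}"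
    using assms(5) unfolding bounded_in_def by blast
  moreover have "Uparrow X \<B> \<subseteq> bornology_entourages X \<B>"
    by (rule Uparrow_subset_bornology_entourages) (fact assms)+
  ultimately have "E `` {x} \<in> \<B>"
    using singletons unfolding bornology_entourages_def by blast
  then show ?thesis using \<open>Y \<subseteq> E `` {x}\<close> subset_closed by blast
qed

lemma bounded_in_Uparrow_bounded_sets_imp:
  assumes "ballean X \<E>" and "bounded_in X (Uparrow X (bounded_sets X \<E>)) Y"
  shows "bounded_in X \<E> Y"
proof -
  have cs: "coarse_structure X \<E>" using assms(1) unfolding ballean_def by blast
  have "Y \<in> bounded_sets X \<E>"
  proof (rule bounded_in_Uparrow_imp_mem[OF _ _ _ _ assms(2)])
    show "bounded_sets X \<E> \<subseteq> Pow X"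
      unfolding bounded_sets_def bounded_in_def by blast
  qed (auto simp: bounded_sets_def
      intro: bounded_in_subset bounded_in_Un[OF assms(1)] bounded_in_singleton[OF cs])
  then show ?thesis unfolding bounded_sets_def by blast
qed

text \<open>An entourage lies below its symmetrisation, which is a generator of \<open>\<Up>\<B>\<close>.\<close>
lemma subset_Uparrow_bounded_sets:
  assumes "coarse_structure X \<E>"
  shows "\<E> \<subseteq> Uparrow X (bounded_sets X \<E>)"
proof
  fix E assume E: "E \<in> \<E>"
  let ?H = "E \<union> E\<inverse>"
  have "E\<inverse> \<in> \<E>" using assms E unfolding coarse_structure_def by blast
  then have H: "?H \<in> \<E>" using assms E unfolding coarse_structure_def by blast
  have diag: "Id_on X \<subseteq> E" and "E \<subseteq> X \<times> X"
    using assms E unfolding coarse_structure_def by blast+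
  then have "?H \<subseteq> X \<times> X" "?H = ?H\<inverse>" "Id_on X \<subseteq> ?H" by auto
  moreover have "\<forall>B\<in>bounded_sets X \<E>. ?H `` B \<in> bounded_sets X \<E>"
    using bounded_in_Image[OF assms H] unfolding bounded_sets_def by blast
  ultimately have "?H \<in> Uparrow X (bounded_sets X \<E>)"
    unfolding Uparrow_def by (intro subsetD[OF generated_coarse_superset]) blast
  moreover have "\<forall>F\<in>Uparrow X (bounded_sets X \<E>). \<forall>F'. Id_on X \<subseteq> F' \<and> F' \<subseteq> F
      \<longrightarrow> F' \<in> Uparrow X (bounded_sets X \<E>)"
    using coarse_structure_Uparrow unfolding coarse_structure_def by blast
  ultimately show "E \<in> Uparrow X (bounded_sets X \<E>)" using diag by blast
qed

theorem proposition1: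
  fixes X :: "'a set" and \<E> \<E>' :: "('a \<times> 'a) set set"
  assumes "extremely_normal X \<E>"
    and "coarse_structure X \<E>'"
    and "\<E> \<subseteq> \<E>'"
    and "maximal_ballean X \<E>'"
  shows "bounded_sets X \<E> = bounded_sets X \<E>' \<and> \<E>' = Uparrow X (bounded_sets X \<E>)"
proof -
  have unbdd': "unbounded_ballean X \<E>'"
    and maximal: "\<And>\<F>. coarse_structure X \<F> \<Longrightarrow> \<E>' \<subset> \<F> \<Longrightarrow> bounded_in X \<F> X"
    using assms(4) unfolding maximal_ballean_def by blast+
  then have bal': "ballean X \<E>'" and "\<not> bounded_in X \<E>' X"
    unfolding unbounded_ballean_def by auto
  have same_bounded: "bounded_sets X \<E> = bounded_sets X \<E>'"
    using bounded_in_extremely_normal_iff[OF assms(1) unbdd' assms(3)]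
    unfolding bounded_sets_def by blast
  let ?U = "Uparrow X (bounded_sets X \<E>')"
  have "\<not> bounded_in X ?U X"
    using bounded_in_Uparrow_bounded_sets_imp[OF bal'] \<open>\<not> bounded_in X \<E>' X\<close> by blast
  moreover have "\<E>' \<subseteq> ?U" using assms(2) by (rule subset_Uparrow_bounded_sets)
  ultimately have "\<E>' = ?U" using maximal[OF coarse_structure_Uparrow] psubsetI by metis
  then show ?thesis unfolding same_bounded by (rule conjI[OF refl])
qed

end
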